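(* Let $(Q,\cdot)$ be a quasigroup. If $Q$ satisfies $(xy)(zz)=(x(yz))z$ for all $x,y,z\in Q$ (LG2-quasigroup), then $Q$ is a right loop. If $Q$ satisfies $x(x(yz))=((xx)y)z$ for all $x,y,z\in Q$ (LC3-quasigroup), then $Q$ is a left loop.
   Context: A quasigroup is a set $Q$ with a binary operation $\cdot$ (written as juxtaposition) such that for all $a,b\in Q$ each of the equations $ax=b$ and $ya=b$ has a unique solution in $Q$. A quasigroup $Q$ is a left loop if there is $e\in Q$ with $ea=a$ for all $a\in Q$, and a right loop if there is $e\in Q$ with $ae=a$ for all $a\in Q$. *)

theory Defs
  imports Main
begin

definition quasigroup :: "'a set \<Rightarrow> ('a \<Rightarrow> 'a \<Rightarrow> 'a) \<Rightarrow> bool" where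
  "quasigroup Q m \<longleftrightarrow> Q \<noteq> {} \<and>
     (\<forall>a\<in>Q. \<forall>b\<in>Q. m a b \<in> Q) \<and>
     (\<forall>a\<in>Q. \<forall>b\<in>Q. \<exists>!x. x \<in> Q \<and> m a x = b) \<and>
     (\<forall>a\<in>Q. \<forall>b\<in>Q. \<exists>!y. y \<in> Q \<and> m y a = b)"

definition left_loop :: "'a set \<Rightarrow> ('a \<Rightarrow> 'a \<Rightarrow> 'a) \<Rightarrow> bool" where
  "left_loop Q m \<longleftrightarrow> quasigroup Q m \<and> (\<exists>e\<in>Q. \<forall>a\<in>Q. m e a = a)"

definition right_loop :: "'a set \<Rightarrow> ('a \<Rightarrow> 'a \<Rightarrow> 'a) \<Rightarrow> bool" where
  "right_loop Q m \<longleftrightarrow> quasigroup Q m \<and> (\<exists>e\<in>Q. \<forall>a\<in>Q. m a e = a)"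

end

theory Submission
  imports Defs
begin

text \<open>In both cases an idempotent does the job. Under LG2, \<open>e = z\z\<close> satisfies
  \<open>(xz)(ee) = (x(ze))e = (xz)e\<close>, so \<open>ee = e\<close>; and for idempotent \<open>e\<close>, LG2 with \<open>z = e\<close>
  reads \<open>(xy)e = (x(ye))e\<close>, whence \<open>ye = y\<close> by cancellation. Under LC3, \<open>e = z/z\<close>
  satisfies \<open>(ee)e = e\<close>; then LC3 with \<open>x = y = e\<close> shows that left multiplication by
  \<open>e\<close> is an involution, and LC3 with \<open>x = e\<close> turns into \<open>yz = ((ee)y)z\<close>, so \<open>ee\<close> is a
  left identity.\<close>

definition lg2_law :: "'a set \<Rightarrow> ('a \<Rightarrow> 'a \<Rightarrow> 'a) \<Rightarrow> bool" where
  "lg2_law Q m \<longleftrightarrow> (\<forall>x\<in>Q. \<forall>y\<in>Q. \<forall>z\<in>Q. m (m x y) (m z z) = m (m x (m y z)) z)"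

definition lc3_law :: "'a set \<Rightarrow> ('a \<Rightarrow> 'a \<Rightarrow> 'a) \<Rightarrow> bool" where
  "lc3_law Q m \<longleftrightarrow> (\<forall>x\<in>Q. \<forall>y\<in>Q. \<forall>z\<in>Q. m x (m x (m y z)) = m (m (m x x) y) z)"

lemma quasigroupD:
  assumes "quasigroup Q m"
  shows "Q \<noteq> {}" "\<forall>a\<in>Q. \<forall>b\<in>Q. m a b \<in> Q"
    "\<forall>a\<in>Q. \<forall>b\<in>Q. \<exists>!x. x \<in> Q \<and> m a x = b"
    "\<forall>a\<in>Q. \<forall>b\<in>Q. \<exists>!y. y \<in> Q \<and> m y a = b"
  using assms unfolding quasigroup_def by simp_all

lemma quasigroup_nonempty:
  assumes "quasigroup Q m"
  obtains z where "z \<in> Q"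
  using quasigroupD(1)[OF assms] by blast

lemma quasigroup_closed:
  assumes "quasigroup Q m" "a \<in> Q" "b \<in> Q"
  shows "m a b \<in> Q"
  using quasigroupD(2)[OF assms(1)] assms(2,3) by blast

lemma quasigroup_left_unique:
  assumes "quasigroup Q m" "a \<in> Q" "b \<in> Q"
  shows "\<exists>!x. x \<in> Q \<and> m a x = b"
  using bspec[OF bspec[OF quasigroupD(3)[OF assms(1)] assms(2)] assms(3)] .

lemma quasigroup_right_unique:
  assumes "quasigroup Q m" "a \<in> Q" "b \<in> Q"
  shows "\<exists>!y. y \<in> Q \<and> m y a = b"
  using bspec[OF bspec[OF quasigroupD(4)[OF assms(1)] assms(2)] assms(3)] .

lemma quasigroup_left_division:
  assumes "quasigroup Q m" "a \<in> Q" "b \<in> Q"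
  obtains x where "x \<in> Q" "m a x = b"
  using quasigroup_left_unique[OF assms] by (elim ex1E) blast

lemma quasigroup_right_division:
  assumes "quasigroup Q m" "a \<in> Q" "b \<in> Q"
  obtains y where "y \<in> Q" "m y a = b"
  using quasigroup_right_unique[OF assms] by (elim ex1E) blast

lemma quasigroup_left_cancel:
  assumes "quasigroup Q m" "a \<in> Q" "x \<in> Q" "y \<in> Q" "m a x = m a y"
  shows "x = y"
proof -
  have "\<exists>\<^sub>\<le>\<^sub>1v. v \<in> Q \<and> m a v = m a x"
    using quasigroup_left_unique[OF assms(1,2) quasigroup_closed[OF assms(1-3)]] by (simp add: ex1_iff_ex_Uniq)
  then show ?thesis
    by (rule Uniq_D) (simp_all add: assms)
qed

lemma quasigroup_right_cancel:
  assumes "quasigroup Q m" "a \<in> Q" "x \<in> Q" "y \<in> Q" "m x a = m y a"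
  shows "x = y"
proof -
  have "\<exists>\<^sub>\<le>\<^sub>1v. v \<in> Q \<and> m v a = m x a"
    using quasigroup_right_unique[OF assms(1,2) quasigroup_closed[OF assms(1,3,2)]] by (simp add: ex1_iff_ex_Uniq)
  then show ?thesis
    by (rule Uniq_D) (simp_all add: assms)
qed

lemma lg2_lawD:
  assumes "lg2_law Q m" "x \<in> Q" "y \<in> Q" "z \<in> Q"
  shows "m (m x y) (m z z) = m (m x (m y z)) z"
  using assms unfolding lg2_law_def by blast

lemma lc3_lawD:
  assumes "lc3_law Q m" "x \<in> Q" "y \<in> Q" "z \<in> Q"
  shows "m x (m x (m y z)) = m (m (m x x) y) z"
  using assms unfolding lc3_law_def by blast

lemma lg2_idempotent_if_right_unit_at:
  assumes Q: "quasigroup Q m" and lg2: "lg2_law Q m"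
    and z: "z \<in> Q" and e: "e \<in> Q" "m z e = z"
  shows "m e e = e"
proof -
  have "m (m z z) (m e e) = m (m z (m z e)) e"
    using lg2_lawD[OF lg2 z z e(1)] .
  also have "\<dots> = m (m z z) e"
    using e(2) by simp
  finally show ?thesis
    using quasigroup_left_cancel[OF Q quasigroup_closed[OF Q z z]] quasigroup_closed[OF Q e(1) e(1)] e(1)
    by blast
qed

lemma lg2_right_unit_if_idempotent:
  assumes Q: "quasigroup Q m" and lg2: "lg2_law Q m"
    and e: "e \<in> Q" "m e e = e" and y: "y \<in> Q"
  shows "m y e = y"
proof -
  have ye: "m y e \<in> Q"
    using quasigroup_closed[OF Q y e(1)] .
  have "m (m e y) e = m (m e (m y e)) e"
    using lg2_lawD[OF lg2 e(1) y e(1)] e(2) by simp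
  then have "m e y = m e (m y e)"
    using quasigroup_right_cancel[OF Q e(1)] quasigroup_closed[OF Q e(1)] y ye by blast
  then show ?thesis
    using quasigroup_left_cancel[OF Q e(1)] y ye by metis
qed

lemma lg2_right_loop:
  assumes Q: "quasigroup Q m" and lg2: "lg2_law Q m"
  shows "right_loop Q m"
proof -
  obtain z where z: "z \<in> Q"
    using quasigroup_nonempty[OF Q] .
  obtain e where e: "e \<in> Q" "m z e = z"
    using quasigroup_left_division[OF Q z z] .
  have "m e e = e"
    using lg2_idempotent_if_right_unit_at[OF Q lg2 z e] .
  then show ?thesis
    unfolding right_loop_def using lg2_right_unit_if_idempotent[OF Q lg2 e(1)] Q e(1) by blast
qed

lemma lc3_square_mult_eq_if_left_unit_at:
  assumes Q: "quasigroup Q m" and lc3: "lc3_law Q m"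
    and z: "z \<in> Q" and e: "e \<in> Q" "m e z = z"
  shows "m (m e e) e = e"
proof -
  have "m (m (m e e) e) z = m e (m e (m e z))"
    using lc3_lawD[OF lc3 e(1) e(1) z] by simp
  also have "\<dots> = m e z"
    using e(2) by simp
  finally show ?thesis
    using quasigroup_right_cancel[OF Q z] quasigroup_closed[OF Q quasigroup_closed[OF Q e(1) e(1)] e(1)] e(1)
    by blast
qed

lemma lc3_left_unit:
  assumes Q: "quasigroup Q m" and lc3: "lc3_law Q m"
    and e: "e \<in> Q" "m (m e e) e = e" and y: "y \<in> Q"
  shows "m (m e e) y = y"
proof -
  have involution: "m e (m e u) = u" if u: "u \<in> Q" for u
  proof -
    have "m e (m e (m e u)) = m e u"
      using lc3_lawD[OF lc3 e(1) e(1) u] e(2) by simp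
    then show ?thesis
      using quasigroup_left_cancel[OF Q e(1)] quasigroup_closed[OF Q e(1)] u by metis
  qed
  have ee: "m e e \<in> Q"
    using quasigroup_closed[OF Q e(1) e(1)] .
  have ye: "m y e \<in> Q"
    using quasigroup_closed[OF Q y e(1)] .
  have "m (m (m e e) y) e = m e (m e (m y e))"
    using lc3_lawD[OF lc3 e(1) y e(1)] by simp
  also have "\<dots> = m y e"
    using involution[OF ye] .
  finally show ?thesis
    by (rule quasigroup_right_cancel[OF Q e(1) quasigroup_closed[OF Q ee y] y])
qed

lemma lc3_left_loop:
  assumes Q: "quasigroup Q m" and lc3: "lc3_law Q m"
  shows "left_loop Q m"
proof -
  obtain z where z: "z \<in> Q"
    using quasigroup_nonempty[OF Q] .
  obtain e where e: "e \<in> Q" "m e z = z"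
    using quasigroup_right_division[OF Q z z] .
  have "m (m e e) e = e"
    using lc3_square_mult_eq_if_left_unit_at[OF Q lc3 z e] .
  then show ?thesis
    unfolding left_loop_def
    using lc3_left_unit[OF Q lc3 e(1)] Q quasigroup_closed[OF Q e(1) e(1)] by blast
qed

theorem mainTheorem5:
  fixes Q :: "'a set" and m :: "'a \<Rightarrow> 'a \<Rightarrow> 'a"
  assumes "quasigroup Q m"
  shows "((\<forall>x\<in>Q. \<forall>y\<in>Q. \<forall>z\<in>Q. m (m x y) (m z z) = m (m x (m y z)) z) \<longrightarrow> right_loop Q m)
       \<and> ((\<forall>x\<in>Q. \<forall>y\<in>Q. \<forall>z\<in>Q. m x (m x (m y z)) = m (m (m x x) y) z) \<longrightarrow> left_loop Q m)"
  using lg2_right_loop[OF assms, unfolded lg2_law_def]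
    lc3_left_loop[OF assms, unfolded lc3_law_def]
  by (intro conjI impI)

end
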